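(* Let $p$ be a prime and $G=\Gamma(Tr(\mathbb{Z}_{p^2}))$. Then $$|E(G)|=\tfrac12\,p^2(p^2-1)\left(p^6+p^5-p^4-2p^2-1\right).$$
   Context: For a ring $S$ with identity whose center $Z(S)$ is not all of $S$, the commuting graph $\Gamma(S)$ is the simple graph with vertex set $S\setminus Z(S)$, in which two distinct vertices $a,b$ are adjacent iff $ab=ba$; $E(G)$ is the edge set. $Tr(R)$ denotes the ring of all $2\times 2$ upper triangular matrices over $R$. *)

theory Defs
  imports Complex_Main "HOL-Computational_Algebra.Primes"
begin

definition ring_center :: "'a set \<Rightarrow> ('a \<Rightarrow> 'a \<Rightarrow> 'a) \<Rightarrow> 'a set" where
  "ring_center S mul = {z \<in> S. \<forall>x\<in>S. mul z x = mul x z}"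

definition commuting_graph_edges :: "'a set \<Rightarrow> ('a \<Rightarrow> 'a \<Rightarrow> 'a) \<Rightarrow> 'a set set" where
  "commuting_graph_edges S mul =
     {{a, b} | a b. a \<in> S - ring_center S mul \<and> b \<in> S - ring_center S mul
                  \<and> a \<noteq> b \<and> mul a b = mul b a}"

text \<open>Tr(Z_n): upper triangular matrices [[a,b],[0,c]] over Z_n, encoded as triples (a,b,c)
  with entries in {0..<n}; multiplication is matrix multiplication mod n.\<close>
definition Tr_carrier :: "int \<Rightarrow> (int \<times> int \<times> int) set" where
  "Tr_carrier n = {(a, b, c). a \<in> {0..<n} \<and> b \<in> {0..<n} \<and> c \<in> {0..<n}}"

definition Tr_mult :: "int \<Rightarrow> (int \<times> int \<times> int) \<Rightarrow> (int \<times> int \<times> int) \<Rightarrow> (int \<times> int \<times> int)" where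
  "Tr_mult n x y = (case x of (a, b, c) \<Rightarrow> case y of (a', b', c') \<Rightarrow>
      ((a * a') mod n, (a * b' + b * c') mod n, (c * c') mod n))"

end

theory Submission
  imports Defs "HOL-Number_Theory.Cong"
begin

(* Two matrices [[a,b],[0,c]] and [[a',b'],[0,c']] over Z_n commute iff (a - c) b' = (a' - c') b
   mod n, i.e. iff the vectors (a - c, b) and (a' - c', b') are collinear mod n.  Since
   x |-> ((a - c, b), c) is a bijection from Tr(Z_n) onto Z_n^2 x Z_n, the centre consists of the
   n scalar matrices, and a non-central matrix with vector v has n K(v) - n - 1 neighbours, where
   K(v) counts the vectors of Z_n^2 collinear with v; the handshake lemma then gives
   2 |E| = n * sum over v <> 0 of (n K(v) - n - 1).  For n = p^2, K(v) = p^2 for the p^4 - p^2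
   vectors with a unit coordinate (a linear congruence with a unit coefficient), and K(v) = p^3
   for the p^2 - 1 nonzero multiples of p (divide the congruence by p). *)

lemma twice_card_doubletons_eq_sum_degrees:
  assumes "finite A" and sym: "\<And>a b. R a b \<Longrightarrow> R b a"
  shows "2 * card {{a, b} | a b. a \<in> A \<and> b \<in> A \<and> a \<noteq> b \<and> R a b}
    = (\<Sum>a\<in>A. card {b \<in> A. a \<noteq> b \<and> R a b})"
proof -
  define E where "E = {{a, b} | a b. a \<in> A \<and> b \<in> A \<and> a \<noteq> b \<and> R a b}"
  define arcs where "arcs e = {(a, b). {a, b} = e \<and> a \<noteq> b}" for e :: "'a set"
  have arcs_two: "card (arcs e) = 2" if e: "e \<in> E" for e
  proof -
    obtain x y where "e = {x, y}" "x \<noteq> y"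
      using e unfolding E_def by blast
    then have "arcs e = {(x, y), (y, x)}"
      by (auto simp: arcs_def doubleton_eq_iff)
    then show ?thesis
      using \<open>x \<noteq> y\<close> by simp
  qed
  have arcs_cover: "Sigma A (\<lambda>a. {b \<in> A. a \<noteq> b \<and> R a b}) = (\<Union>e\<in>E. arcs e)"
  proof (intro equalityI subsetI)
    fix z assume "z \<in> Sigma A (\<lambda>a. {b \<in> A. a \<noteq> b \<and> R a b})"
    then show "z \<in> (\<Union>e\<in>E. arcs e)"
      unfolding E_def arcs_def by blast
  next
    fix z assume "z \<in> (\<Union>e\<in>E. arcs e)"
    then obtain a b x y where "z = (a, b)" "{a, b} = {x, y}" "a \<noteq> b"
      and "x \<in> A" "y \<in> A" "R x y"
      unfolding E_def arcs_def by blast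
    moreover have "a = x \<and> b = y \<or> a = y \<and> b = x"
      using \<open>{a, b} = {x, y}\<close> by (simp add: doubleton_eq_iff)
    ultimately show "z \<in> Sigma A (\<lambda>a. {b \<in> A. a \<noteq> b \<and> R a b})"
      using sym[of x y] by auto
  qed
  have "finite E"
    using assms(1) by (rule finite_subset[rotated, OF finite_Pow_iff[THEN iffD2]]) (auto simp: E_def)
  have "(\<Sum>a\<in>A. card {b \<in> A. a \<noteq> b \<and> R a b}) = card (Sigma A (\<lambda>a. {b \<in> A. a \<noteq> b \<and> R a b}))"
    using assms(1) by (simp add: card_SigmaI)
  also have "\<dots> = (\<Sum>e\<in>E. card (arcs e))"
    unfolding arcs_cover using \<open>finite E\<close> arcs_two
    by (intro card_UN_disjoint) (auto simp: arcs_def intro: card_ge_0_finite)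
  also have "\<dots> = 2 * card E"
    using arcs_two by simp
  finally show ?thesis
    by (simp add: E_def)
qed

lemma linear_congruence_solution:
  fixes m u t :: int
  assumes "m > 0" "coprime u m"
  obtains r where "0 \<le> r" "r < m" "\<And>x. m dvd u * x - t \<longleftrightarrow> x mod m = r"
proof -
  obtain a where a: "[u * a = 1] (mod m)"
    using cong_solve_coprime_int[OF assms(2)] by blast
  have "[u * (a * t) = t] (mod m)"
    using cong_scalar_right[OF a, of t] by (simp add: ac_simps)
  then have "m dvd u * x - t \<longleftrightarrow> [u * x = u * (a * t)] (mod m)" for x
    by (metis cong_iff_dvd_diff cong_sym cong_trans)
  also have "\<dots> x \<longleftrightarrow> x mod m = (a * t) mod m" for x
    using cong_mult_lcancel[OF assms(2)] by (simp add: cong_def)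
  finally show ?thesis
    using that[of "(a * t) mod m"] assms(1) by simp
qed

lemma card_residue_class:
  fixes m k r :: int
  assumes "m > 0" "k \<ge> 0" "0 \<le> r" "r < m"
  shows "card {x \<in> {0..<m * k}. x mod m = r} = nat k"
proof -
  have "{x \<in> {0..<m * k}. x mod m = r} = (\<lambda>j. r + m * j) ` {0..<k}"
  proof (intro set_eqI iffI)
    fix x assume "x \<in> {x \<in> {0..<m * k}. x mod m = r}"
    then have x: "0 \<le> x" "x < m * k" "x mod m = r"
      by auto
    then have x_eq: "x = r + m * (x div m)"
      by (metis add.commute mult_div_mod_eq)
    then have "m * (x div m) < m * k"
      using x(2) assms(3) by linarith
    then have "x div m < k"
      using assms(1) by simp
    moreover have "0 \<le> x div m"
      using x(1) assms(1) by (simp add: pos_imp_zdiv_nonneg_iff)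
    ultimately show "x \<in> (\<lambda>j. r + m * j) ` {0..<k}"
      using x_eq by auto
  next
    fix x assume "x \<in> (\<lambda>j. r + m * j) ` {0..<k}"
    then obtain j where j: "0 \<le> j" "j < k" "x = r + m * j"
      by auto
    have "m * (j + 1) \<le> m * k"
      using j assms(1) by (intro mult_left_mono) auto
    then have "m * j + m \<le> m * k"
      by (simp add: algebra_simps)
    then show "x \<in> {x \<in> {0..<m * k}. x mod m = r}"
      using j assms by auto
  qed
  moreover have "inj_on (\<lambda>j. r + m * j) {0..<k}"
    using assms(1) by (auto simp: inj_on_def)
  ultimately show ?thesis
    by (simp add: card_image)
qed

lemma card_linear_congruence_solutions:
  fixes m k u t :: int
  assumes "m > 0" "k \<ge> 0" "coprime u m"
  shows "card {x \<in> {0..<m * k}. m dvd u * x - t} = nat k"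
proof -
  obtain r where "0 \<le> r" "r < m" "\<And>x. m dvd u * x - t \<longleftrightarrow> x mod m = r"
    using linear_congruence_solution[OF assms(1,3)] by blast
  then show ?thesis
    using card_residue_class[OF assms(1,2)] by simp
qed

lemma card_collinear_solutions:
  fixes m k d b :: int
  assumes "m > 0" "k \<ge> 0" "coprime d m \<or> coprime b m"
  shows "card {(x, y). x \<in> {0..<m * k} \<and> y \<in> {0..<m * k} \<and> m dvd d * y - b * x}
    = nat (m * k) * nat k"
proof -
  have count: "card {(x, y). x \<in> {0..<m * k} \<and> y \<in> {0..<m * k} \<and> m dvd u * y - t * x}
      = nat (m * k) * nat k" if "coprime u m" for u t
  proof -
    have "card {(x, y). x \<in> {0..<m * k} \<and> y \<in> {0..<m * k} \<and> m dvd u * y - t * x}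
        = card (Sigma {0..<m * k} (\<lambda>x. {y \<in> {0..<m * k}. m dvd u * y - t * x}))"
      by (intro arg_cong[where f = card]) auto
    also have "\<dots> = (\<Sum>x\<in>{0..<m * k}. nat k)"
      using card_linear_congruence_solutions[OF assms(1,2) that]
      by (subst card_SigmaI) (auto intro: finite_subset[of _ "{0..<m * k}"])
    also have "\<dots> = nat (m * k) * nat k"
      by simp
    finally show ?thesis .
  qed
  from assms(3) show ?thesis
  proof
    assume "coprime d m"
    then show ?thesis using count by blast
  next
    assume "coprime b m"
    have "m dvd d * y - b * x \<longleftrightarrow> m dvd b * x - d * y" for x y
      by (metis dvd_diff_commute)
    then have "{(x, y). x \<in> {0..<m * k} \<and> y \<in> {0..<m * k} \<and> m dvd d * y - b * x}
        = prod.swap ` {(y, x). y \<in> {0..<m * k} \<and> x \<in> {0..<m * k} \<and> m dvd b * x - d * y}"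
      by auto
    then show ?thesis
      using count[OF \<open>coprime b m\<close>] by (simp add: card_image)
  qed
qed

definition Tr_proj :: "int \<Rightarrow> int \<times> int \<times> int \<Rightarrow> int \<times> int" where
  "Tr_proj n x = (case x of (a, b, c) \<Rightarrow> ((a - c) mod n, b))"

definition collinear_mod :: "int \<Rightarrow> int \<times> int \<Rightarrow> int \<times> int \<Rightarrow> bool" where
  "collinear_mod n v w \<longleftrightarrow> n dvd fst v * snd w - snd v * fst w"

definition collinear_count :: "int \<Rightarrow> int \<times> int \<Rightarrow> nat" where
  "collinear_count n v = card {w \<in> {0..<n} \<times> {0..<n}. collinear_mod n v w}"

lemma Tr_mult_commute_iff:
  "Tr_mult n x y = Tr_mult n y x \<longleftrightarrow> collinear_mod n (Tr_proj n x) (Tr_proj n y)"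
proof -
  obtain a b c a' b' c' where xy: "x = (a, b, c)" "y = (a', b', c')"
    by (metis prod.collapse)
  have "[b' * ((a - c) mod n) - b * ((a' - c') mod n) = b' * (a - c) - b * (a' - c')] (mod n)"
    by (intro cong_diff cong_mult) (simp_all add: cong_def)
  moreover have "b' * (a - c) - b * (a' - c') = (a * b' + b * c') - (a' * b + b' * c)"
    by (simp add: algebra_simps)
  ultimately have "(b' * ((a - c) mod n) - b * ((a' - c') mod n)) mod n
      = ((a * b' + b * c') - (a' * b + b' * c)) mod n"
    by (simp add: cong_def)
  moreover have "Tr_mult n x y = Tr_mult n y x \<longleftrightarrow> n dvd (a * b' + b * c') - (a' * b + b' * c)"
    unfolding xy Tr_mult_def by (simp add: mod_eq_dvd_iff ac_simps)
  moreover have "collinear_mod n (Tr_proj n x) (Tr_proj n y)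
      \<longleftrightarrow> n dvd b' * ((a - c) mod n) - b * ((a' - c') mod n)"
    unfolding xy collinear_mod_def Tr_proj_def by (simp add: ac_simps)
  ultimately show ?thesis
    by (simp add: dvd_eq_mod_eq_0)
qed

lemma finite_Tr_carrier: "finite (Tr_carrier n)"
  unfolding Tr_carrier_def by (auto intro: finite_subset[of _ "{0..<n} \<times> {0..<n} \<times> {0..<n}"])

lemma Tr_proj_fibres:
  assumes "n > 0"
  shows "bij_betw (\<lambda>x. (Tr_proj n x, snd (snd x)))
    {x \<in> Tr_carrier n. P (Tr_proj n x)} ({v \<in> {0..<n} \<times> {0..<n}. P v} \<times> {0..<n})"
  unfolding bij_betw_def
proof
  show "inj_on (\<lambda>x. (Tr_proj n x, snd (snd x))) {x \<in> Tr_carrier n. P (Tr_proj n x)}"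
  proof (rule inj_onI)
    fix x y
    assume "x \<in> {x \<in> Tr_carrier n. P (Tr_proj n x)}" "y \<in> {x \<in> Tr_carrier n. P (Tr_proj n x)}"
      and eq: "(Tr_proj n x, snd (snd x)) = (Tr_proj n y, snd (snd y))"
    moreover obtain a b c a' b' c' where xy: "x = (a, b, c)" "y = (a', b', c')"
      by (metis prod.collapse)
    ultimately have range: "a \<in> {0..<n}" "a' \<in> {0..<n}" and "b = b'" "c = c'"
      and "(a - c) mod n = (a' - c) mod n"
      by (auto simp: Tr_carrier_def Tr_proj_def)
    then have "n dvd a - a'"
      by (simp add: mod_eq_dvd_iff)
    then have "a mod n = a' mod n"
      by (simp add: mod_eq_dvd_iff)
    then show "x = y"
      using range xy \<open>b = b'\<close> \<open>c = c'\<close> by simp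
  qed
next
  show "(\<lambda>x. (Tr_proj n x, snd (snd x))) ` {x \<in> Tr_carrier n. P (Tr_proj n x)}
      = {v \<in> {0..<n} \<times> {0..<n}. P v} \<times> {0..<n}"
  proof (intro equalityI subsetI)
    fix z assume "z \<in> {v \<in> {0..<n} \<times> {0..<n}. P v} \<times> {0..<n}"
    then obtain d b c where z: "z = ((d, b), c)" "d \<in> {0..<n}" "b \<in> {0..<n}" "c \<in> {0..<n}" "P (d, b)"
      by auto
    then have "Tr_proj n ((d + c) mod n, b, c) = (d, b)"
      by (simp add: Tr_proj_def mod_diff_left_eq)
    moreover have "((d + c) mod n, b, c) \<in> Tr_carrier n"
      using z assms by (simp add: Tr_carrier_def)
    ultimately show "z \<in> (\<lambda>x. (Tr_proj n x, snd (snd x))) ` {x \<in> Tr_carrier n. P (Tr_proj n x)}"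
      using z by (intro image_eqI[of _ _ "((d + c) mod n, b, c)"]) auto
  qed (use assms in \<open>auto simp: Tr_proj_def Tr_carrier_def\<close>)
qed

lemma card_Tr_proj_preimage:
  assumes "n > 0"
  shows "card {x \<in> Tr_carrier n. P (Tr_proj n x)} = card {v \<in> {0..<n} \<times> {0..<n}. P v} * nat n"
  using bij_betw_same_card[OF Tr_proj_fibres[OF assms]] by (simp add: card_cartesian_product)

lemma sum_Tr_proj:
  fixes h :: "int \<times> int \<Rightarrow> int"
  assumes "n > 0"
  shows "(\<Sum>x \<in> {x \<in> Tr_carrier n. P (Tr_proj n x)}. h (Tr_proj n x))
    = n * (\<Sum>v \<in> {v \<in> {0..<n} \<times> {0..<n}. P v}. h v)"
proof -
  have "(\<Sum>x \<in> {x \<in> Tr_carrier n. P (Tr_proj n x)}. h (Tr_proj n x))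
      = (\<Sum>z \<in> {v \<in> {0..<n} \<times> {0..<n}. P v} \<times> {0..<n}. h (fst z))"
    using sum.reindex_bij_betw[OF Tr_proj_fibres[OF assms], of "h \<circ> fst"] by simp
  also have "\<dots> = (\<Sum>v \<in> {v \<in> {0..<n} \<times> {0..<n}. P v}. \<Sum>c\<in>{0..<n}. h v)"
    by (subst sum.cartesian_product) (simp add: split_def)
  finally show ?thesis
    using assms by (simp add: sum_distrib_left mult.commute)
qed

lemma Tr_center:
  assumes "n > 1"
  shows "ring_center (Tr_carrier n) (Tr_mult n) = {x \<in> Tr_carrier n. Tr_proj n x = (0, 0)}"
proof (intro equalityI subsetI)
  fix z assume z: "z \<in> ring_center (Tr_carrier n) (Tr_mult n)"
  obtain d b where db: "Tr_proj n z = (d, b)"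
    by fastforce
  have range: "0 \<le> d" "d < n" "0 \<le> b" "b < n"
    using z db assms by (auto simp: ring_center_def Tr_proj_def Tr_carrier_def)
  have "(1, 0, 0) \<in> Tr_carrier n" "(0, 1, 0) \<in> Tr_carrier n"
    using assms by (auto simp: Tr_carrier_def)
  then have "collinear_mod n (d, b) (Tr_proj n (1, 0, 0))" "collinear_mod n (d, b) (Tr_proj n (0, 1, 0))"
    using z db by (auto simp: ring_center_def Tr_mult_commute_iff)
  then have "n dvd b" "n dvd d"
    using assms by (auto simp: collinear_mod_def Tr_proj_def)
  then have "d = 0" "b = 0"
    using range by (metis dvd_eq_mod_eq_0 mod_pos_pos_trivial)+
  then show "z \<in> {x \<in> Tr_carrier n. Tr_proj n x = (0, 0)}"
    using z db by (simp add: ring_center_def)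
next
  fix z assume z: "z \<in> {x \<in> Tr_carrier n. Tr_proj n x = (0, 0)}"
  then have "Tr_mult n z x = Tr_mult n x z" for x
    unfolding Tr_mult_commute_iff by (simp add: collinear_mod_def)
  then show "z \<in> ring_center (Tr_carrier n) (Tr_mult n)"
    using z by (simp add: ring_center_def)
qed

lemma Tr_degree:
  assumes "n > 1" "x \<in> Tr_carrier n" "Tr_proj n x \<noteq> (0, 0)"
  defines "V \<equiv> Tr_carrier n - ring_center (Tr_carrier n) (Tr_mult n)"
  shows "int (card {y \<in> V. x \<noteq> y \<and> Tr_mult n x y = Tr_mult n y x})
    = n * int (collinear_count n (Tr_proj n x)) - n - 1"
proof -
  define A where "A = {y \<in> Tr_carrier n. collinear_mod n (Tr_proj n x) (Tr_proj n y)}"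
  define Z where "Z = {y \<in> Tr_carrier n. Tr_proj n y = (0, 0)}"
  have card_A: "card A = collinear_count n (Tr_proj n x) * nat n"
    unfolding A_def collinear_count_def using assms(1) by (intro card_Tr_proj_preimage) simp
  have "card Z = card {v \<in> {0..<n} \<times> {0..<n}. v = (0, 0)} * nat n"
    unfolding Z_def using assms(1) by (intro card_Tr_proj_preimage) simp
  also have "{v \<in> {0..<n} \<times> {0..<n}. v = (0, 0)} = {(0, 0)}"
    using assms(1) by auto
  finally have card_Z: "card Z = nat n"
    by simp
  have "{y \<in> V. x \<noteq> y \<and> Tr_mult n x y = Tr_mult n y x} = A - Z - {x}"
    unfolding V_def A_def Z_def Tr_center[OF assms(1)] by (auto simp: Tr_mult_commute_iff)
  moreover have "Z \<subseteq> A" "x \<in> A - Z" "finite A"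
    using assms(2,3) by (auto simp: A_def Z_def collinear_mod_def finite_Tr_carrier)
  then have "card (A - Z - {x}) = card A - card Z - 1" "card Z < card A"
    by (auto simp: card_Diff_subset finite_subset intro: psubset_card_mono)
  then have "int (card (A - Z - {x})) = int (card A) - int (card Z) - 1"
    by (simp add: of_nat_diff)
  moreover have "int (card A) = n * int (collinear_count n (Tr_proj n x))" "int (card Z) = n"
    using card_A card_Z assms(1) by simp_all
  ultimately show ?thesis
    by simp
qed

lemma twice_card_Tr_commuting_edges:
  assumes "n > 1"
  shows "2 * int (card (commuting_graph_edges (Tr_carrier n) (Tr_mult n)))
    = n * (\<Sum>v \<in> {0..<n} \<times> {0..<n} - {(0, 0)}. n * int (collinear_count n v) - n - 1)"
proof -
  define V where "V = Tr_carrier n - ring_center (Tr_carrier n) (Tr_mult n)"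
  have V_eq: "V = {x \<in> Tr_carrier n. Tr_proj n x \<noteq> (0, 0)}"
    unfolding V_def Tr_center[OF assms] by auto
  have "finite V"
    unfolding V_def by (simp add: finite_Tr_carrier)
  then have handshake: "2 * card (commuting_graph_edges (Tr_carrier n) (Tr_mult n))
      = (\<Sum>x\<in>V. card {y \<in> V. x \<noteq> y \<and> Tr_mult n x y = Tr_mult n y x})"
    unfolding commuting_graph_edges_def V_def[symmetric]
    by (rule twice_card_doubletons_eq_sum_degrees[where R = "\<lambda>x y. Tr_mult n x y = Tr_mult n y x"])
      simp_all
  have "2 * int (card (commuting_graph_edges (Tr_carrier n) (Tr_mult n)))
      = (\<Sum>x\<in>V. int (card {y \<in> V. x \<noteq> y \<and> Tr_mult n x y = Tr_mult n y x}))"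
    using arg_cong[where f = int, OF handshake] by (simp add: of_nat_sum)
  also have "\<dots> = (\<Sum>x\<in>V. n * int (collinear_count n (Tr_proj n x)) - n - 1)"
    using Tr_degree[OF assms, folded V_def] by (intro sum.cong) (auto simp: V_eq)
  also have "\<dots> = n * (\<Sum>v \<in> {v \<in> {0..<n} \<times> {0..<n}. v \<noteq> (0, 0)}. n * int (collinear_count n v) - n - 1)"
    unfolding V_eq using assms by (intro sum_Tr_proj) simp
  finally show ?thesis
    by (simp add: set_diff_eq)
qed

lemma collinear_count_unit:
  assumes "n > 0" "coprime d n \<or> coprime b n"
  shows "collinear_count n (d, b) = nat n"
proof -
  have "{w \<in> {0..<n} \<times> {0..<n}. collinear_mod n (d, b) w}
      = {(x, y). x \<in> {0..<n * 1} \<and> y \<in> {0..<n * 1} \<and> n dvd d * y - b * x}"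
    by (auto simp: collinear_mod_def)
  then show ?thesis
    unfolding collinear_count_def using card_collinear_solutions[of n 1 d b] assms by simp
qed

lemma collinear_count_prime_multiple:
  fixes p d b :: int
  assumes "prime p" "p dvd d" "p dvd b" "\<not> (p * p dvd d \<and> p * p dvd b)"
  shows "collinear_count (p * p) (d, b) = nat (p ^ 3)"
proof -
  obtain d' b' where d': "d = p * d'" and b': "b = p * b'"
    using assms(2,3) by (auto elim!: dvdE)
  have p: "p > 1"
    using assms(1) prime_gt_1_int by blast
  have "\<not> (p dvd d' \<and> p dvd b')"
    using assms(4) unfolding d' b' by auto
  then have "coprime d' p \<or> coprime b' p"
    using prime_imp_coprime[OF assms(1)] by (auto simp: coprime_commute)
  moreover have "collinear_mod (p * p) (d, b) (x, y) \<longleftrightarrow> p dvd d' * y - b' * x" for x y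
  proof -
    have "d * y - b * x = p * (d' * y - b' * x)"
      unfolding d' b' by (simp add: algebra_simps)
    then show ?thesis
      unfolding collinear_mod_def using p by simp
  qed
  then have "{w \<in> {0..<p * p} \<times> {0..<p * p}. collinear_mod (p * p) (d, b) w}
      = {(x, y). x \<in> {0..<p * p} \<and> y \<in> {0..<p * p} \<and> p dvd d' * y - b' * x}"
    by auto
  ultimately show ?thesis
    unfolding collinear_count_def using card_collinear_solutions[of p p d' b'] p
    by (simp add: nat_mult_distrib power3_eq_cube)
qed

lemma twice_card_Tr_commuting_edges_prime_square:
  fixes p :: int
  assumes "prime p"
  shows "2 * int (card (commuting_graph_edges (Tr_carrier (p * p)) (Tr_mult (p * p))))
    = p^2 * (p^2 - 1) * (p^6 + p^5 - p^4 - 2 * p^2 - 1)"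
proof -
  define n where "n = p * p"
  have p: "p > 1"
    using assms prime_gt_1_int by blast
  then have n: "n > 1"
    unfolding n_def by (metis less_1_mult)
  define Q where "Q = {0..<n} \<times> {0..<n} - {(0, 0)}"
  define D where "D = {v \<in> Q. p dvd fst v \<and> p dvd snd v}"
  define M where "M = {x \<in> {0..<p * p}. x mod p = 0}"
  have "finite Q" "D \<subseteq> Q"
    unfolding Q_def D_def by auto
  have "card M = nat p"
    unfolding M_def using card_residue_class[of p p 0] p by simp
  moreover have "D = M \<times> M - {(0, 0)}"
    unfolding D_def Q_def M_def n_def by (auto simp: dvd_eq_mod_eq_0)
  moreover have "(0, 0) \<in> M \<times> M"
    unfolding M_def using p by auto
  ultimately have card_D: "int (card D) = p^2 - 1"
    using p by (simp add: card_cartesian_product power2_eq_square of_nat_diff)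
  have "int (card Q) = n^2 - 1"
    unfolding Q_def using n by (simp add: card_cartesian_product power2_eq_square of_nat_diff)
  then have card_Q_D: "int (card (Q - D)) = n^2 - p^2"
    using card_D \<open>finite Q\<close> \<open>D \<subseteq> Q\<close> by (simp add: card_Diff_subset finite_subset card_mono of_nat_diff)
  have on_D: "collinear_count n v = nat (p ^ 3)" if v: "v \<in> D" for v
  proof -
    obtain d b where v_eq: "v = (d, b)"
      by fastforce
    have range: "d \<in> {0..<p * p}" "b \<in> {0..<p * p}"
      and "(d, b) \<noteq> (0, 0)" "p dvd d" "p dvd b"
      using v unfolding v_eq D_def Q_def n_def by auto
    moreover have "\<not> (p * p dvd d \<and> p * p dvd b)"
      using range \<open>(d, b) \<noteq> (0, 0)\<close> by (auto simp: zdvd_not_zless)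
    ultimately show ?thesis
      unfolding n_def v_eq using collinear_count_prime_multiple[OF assms] by simp
  qed
  have on_Q_D: "collinear_count n v = nat n" if v: "v \<in> Q - D" for v
  proof -
    obtain d b where v_eq: "v = (d, b)"
      by fastforce
    have "\<not> (p dvd d \<and> p dvd b)"
      using v unfolding v_eq D_def by auto
    then have "coprime d p \<or> coprime b p"
      using prime_imp_coprime[OF assms] by (auto simp: coprime_commute)
    then have "coprime d n \<or> coprime b n"
      unfolding n_def by simp
    then show ?thesis
      unfolding v_eq using n by (intro collinear_count_unit) simp_all
  qed
  have "(\<Sum>v\<in>Q. n * int (collinear_count n v) - n - 1)
      = (\<Sum>v\<in>Q - D. n * n - n - 1) + (\<Sum>v\<in>D. n * p ^ 3 - n - 1)"
    using on_D on_Q_D n p \<open>finite Q\<close> \<open>D \<subseteq> Q\<close> by (simp add: sum.subset_diff[of D Q])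
  also have "\<dots> = (n^2 - p^2) * (n * n - n - 1) + (p^2 - 1) * (n * p ^ 3 - n - 1)"
    using card_D card_Q_D by simp
  finally have "2 * int (card (commuting_graph_edges (Tr_carrier n) (Tr_mult n)))
      = n * ((n^2 - p^2) * (n * n - n - 1) + (p^2 - 1) * (n * p ^ 3 - n - 1))"
    using twice_card_Tr_commuting_edges[OF n] by (simp add: Q_def)
  also have "\<dots> = p^2 * (p^2 - 1) * (p^6 + p^5 - p^4 - 2 * p^2 - 1)"
    unfolding n_def by algebra
  finally show ?thesis
    unfolding n_def .
qed

theorem mainTheorem9:
  fixes p :: nat
  assumes "prime p"
  shows "real (card (commuting_graph_edges (Tr_carrier (int p ^ 2)) (Tr_mult (int p ^ 2))))
         = 1/2 * real p ^ 2 * (real p ^ 2 - 1) * (real p ^ 6 + real p ^ 5 - real p ^ 4 - 2 * real p ^ 2 - 1)"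
proof -
  have "prime (int p)"
    using assms by (simp add: prime_nat_int_transfer)
  then have "real_of_int (2 * int (card (commuting_graph_edges (Tr_carrier (int p * int p)) (Tr_mult (int p * int p)))))
      = real_of_int (int p ^ 2 * (int p ^ 2 - 1) * (int p ^ 6 + int p ^ 5 - int p ^ 4 - 2 * int p ^ 2 - 1))"
    by (subst twice_card_Tr_commuting_edges_prime_square) simp_all
  then show ?thesis
    by (simp add: power2_eq_square)
qed

end
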